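(* Let $M=M(S^2;\frac{q_1}{p_1},\frac{q_2}{p_2},\frac{q_3}{p_3})$ with $e(M)\neq0$, and let $\rho:\pi_1(M)\to\mathrm{SL}_2(\mathbb{C})$ be a diagonal representation with $\rho(h)=\pm I$. Then $H^1(M,\mathrm{Ad}\,\rho)=0$ if $\rho$ is not exceptional, and $\dim H^1(M,\mathrm{Ad}\,\rho)=2$ if $\rho$ is exceptional.
   Context: $M(S^2;\frac{q_1}{p_1},\frac{q_2}{p_2},\frac{q_3}{p_3})$ ($(p_i,q_i)$ coprime, $p_i\ge1$) is the closed Seifert manifold obtained from $S_{0,3}\times S^1$ by gluing solid tori whose meridians are $p_ic_i+q_ih_i$; $e(M)=\sum_iq_i/p_i$; $\pi_1(M)=\langle c_1,c_2,c_3,h\mid [c_i,h]=1=c_i^{p_i}h^{q_i},\ c_1c_2c_3=1\rangle$. A representation $\rho$ is exceptional if $\rho(h)=\pm I$ and $\rho(c_i)\neq\pm I$ for $i=1,2,3$. $\mathrm{Ad}\,\rho$ is the conjugation action on $\mathfrak{sl}_2(\mathbb{C})$ and $H^1(M,\mathrm{Ad}\,\rho)=Z^1/B^1$, where $Z^1$ is the space of maps $\varepsilon:\pi_1(M)\to\mathfrak{sl}_2(\mathbb{C})$ with $\varepsilon(xy)=\varepsilon(x)+\mathrm{Ad}\,\rho(x)\varepsilon(y)$ and $B^1=\{x\mapsto A-\mathrm{Ad}\,\rho(x)A : A\in\mathfrak{sl}_2(\mathbb{C})\}$. *)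

theory Defs
  imports "HOL-Analysis.Analysis"
begin

type_synonym cmat = "complex^2^2"

text \<open>Generators of pi_1(M) for M = M(S^2; q1/p1, q2/p2, q3/p3).\<close>
datatype gen = C1 | C2 | C3 | H

fun cg :: "nat \<Rightarrow> gen" where
  "cg (Suc 0) = C1" | "cg (Suc (Suc 0)) = C2" | "cg _ = C3"

text \<open>Words in the free group: a letter (g, True) is g, (g, False) is g^-1.\<close>
type_synonym word = "(gen \<times> bool) list"

definition pw :: "gen \<Rightarrow> int \<Rightarrow> word" where
  "pw g k = (if 0 \<le> k then replicate (nat k) (g, True) else replicate (nat (- k)) (g, False))"

definition relators :: "(nat \<Rightarrow> int) \<Rightarrow> (nat \<Rightarrow> int) \<Rightarrow> word set" where
  "relators p q =
     {[(cg i, True), (H, True), (cg i, False), (H, False)] | i. i \<in> {1,2,3}}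
   \<union> {pw (cg i) (p i) @ pw H (q i) | i. i \<in> {1,2,3}}
   \<union> {[(C1, True), (C2, True), (C3, True)]}"

text \<open>Equality in pi_1(M) = free group / normal closure of the relators.\<close>
inductive pi1_eq :: "(nat \<Rightarrow> int) \<Rightarrow> (nat \<Rightarrow> int) \<Rightarrow> word \<Rightarrow> word \<Rightarrow> bool"
  for p q where
  refl: "pi1_eq p q w w"
| sym: "pi1_eq p q u v \<Longrightarrow> pi1_eq p q v u"
| trans: "pi1_eq p q u v \<Longrightarrow> pi1_eq p q v w \<Longrightarrow> pi1_eq p q u w"
| cancel: "pi1_eq p q (u @ [(g, b), (g, \<not> b)] @ v) (u @ v)"
| rel: "r \<in> relators p q \<Longrightarrow> pi1_eq p q (u @ r @ v) (u @ v)"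

text \<open>A representation pi_1(M) -> SL_2(C), given by images of the generators.\<close>
definition letter_mat :: "(gen \<Rightarrow> cmat) \<Rightarrow> gen \<times> bool \<Rightarrow> cmat" where
  "letter_mat \<rho> x = (if snd x then \<rho> (fst x) else matrix_inv (\<rho> (fst x)))"

definition rho_word :: "(gen \<Rightarrow> cmat) \<Rightarrow> word \<Rightarrow> cmat" where
  "rho_word \<rho> w = foldr (\<lambda>x A. letter_mat \<rho> x ** A) w (mat 1)"

definition is_SL2_rep :: "(nat \<Rightarrow> int) \<Rightarrow> (nat \<Rightarrow> int) \<Rightarrow> (gen \<Rightarrow> cmat) \<Rightarrow> bool" where
  "is_SL2_rep p q \<rho> \<longleftrightarrow> (\<forall>g. det (\<rho> g) = 1) \<and> (\<forall>r \<in> relators p q. rho_word \<rho> r = mat 1)"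

definition is_diagonal :: "cmat \<Rightarrow> bool" where
  "is_diagonal A \<longleftrightarrow> A $ 1 $ 2 = 0 \<and> A $ 2 $ 1 = 0"

definition diagonal_rep :: "(gen \<Rightarrow> cmat) \<Rightarrow> bool" where
  "diagonal_rep \<rho> \<longleftrightarrow> (\<forall>g. is_diagonal (\<rho> g))"

definition exceptional :: "(gen \<Rightarrow> cmat) \<Rightarrow> bool" where
  "exceptional \<rho> \<longleftrightarrow> (\<rho> H = mat 1 \<or> \<rho> H = - mat 1) \<and>
     (\<forall>i \<in> {1,2,3::nat}. \<rho> (cg i) \<noteq> mat 1 \<and> \<rho> (cg i) \<noteq> - mat 1)"

definition sl2 :: "cmat set" where
  "sl2 = {A. trace A = 0}"

definition Ad :: "cmat \<Rightarrow> cmat \<Rightarrow> cmat" where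
  "Ad P A = P ** A ** matrix_inv P"

definition csmult :: "complex \<Rightarrow> cmat \<Rightarrow> cmat" where
  "csmult c A = (\<chi> i j. c * A $ i $ j)"

text \<open>Cocycles and coboundaries, as functions on pi_1(M) (i.e. functions on words
  that are constant on pi_1-classes).\<close>
definition Z1 :: "(nat \<Rightarrow> int) \<Rightarrow> (nat \<Rightarrow> int) \<Rightarrow> (gen \<Rightarrow> cmat) \<Rightarrow> (word \<Rightarrow> cmat) set" where
  "Z1 p q \<rho> = {\<epsilon>. (\<forall>w. \<epsilon> w \<in> sl2) \<and> (\<forall>u v. pi1_eq p q u v \<longrightarrow> \<epsilon> u = \<epsilon> v) \<and>
       (\<forall>u v. \<epsilon> (u @ v) = \<epsilon> u + Ad (rho_word \<rho> u) (\<epsilon> v))}"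

definition B1 :: "(gen \<Rightarrow> cmat) \<Rightarrow> (word \<Rightarrow> cmat) set" where
  "B1 \<rho> = {(\<lambda>w. A - Ad (rho_word \<rho> w) A) | A. A \<in> sl2}"

text \<open>Complex dimension of the quotient space Z/B equals n: there are n elements of Z
  whose classes form a C-basis of Z/B.\<close>
definition lincomb :: "complex list \<Rightarrow> (word \<Rightarrow> cmat) list \<Rightarrow> word \<Rightarrow> cmat" where
  "lincomb cs es = (\<lambda>w. \<Sum>i<length es. csmult (cs ! i) ((es ! i) w))"

definition quot_dim_eq :: "nat \<Rightarrow> (word \<Rightarrow> cmat) set \<Rightarrow> (word \<Rightarrow> cmat) set \<Rightarrow> bool" where
  "quot_dim_eq n Z B \<longleftrightarrow> (\<exists>es. length es = n \<and> set es \<subseteq> Z \<and>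
     (\<forall>\<epsilon>\<in>Z. \<exists>cs. length cs = n \<and> \<epsilon> - lincomb cs es \<in> B) \<and>
     (\<forall>cs. length cs = n \<and> lincomb cs es \<in> B \<longrightarrow> (\<forall>c \<in> set cs. c = 0)))"

definition H1_dim :: "(nat \<Rightarrow> int) \<Rightarrow> (nat \<Rightarrow> int) \<Rightarrow> (gen \<Rightarrow> cmat) \<Rightarrow> nat \<Rightarrow> bool" where
  "H1_dim p q \<rho> n \<longleftrightarrow> quot_dim_eq n (Z1 p q \<rho>) (B1 \<rho>)"

end

theory Submission
  imports Defs
begin

text \<open>For diagonal \<open>\<rho> = diag(\<alpha>, 1/\<alpha>)\<close> the adjoint action splits \<open>sl\<^sub>2(\<complex>)\<close> into the diagonal
  and the two off-diagonal lines, on which \<open>\<pi>\<^sub>1(M)\<close> acts by the characters \<open>1\<close>, \<open>\<alpha>\<^sup>2\<close> and \<open>1/\<alpha>\<^sup>2\<close>,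
  all trivial on the fibre \<open>h\<close>. So it suffices to compute \<open>H\<^sup>1\<close> with coefficients in a character
  \<open>m\<close> with \<open>m(h) = 1\<close>. A crossed homomorphism \<open>f\<close> is determined by its values on the generators.
  The relators \<open>[c\<^sub>i, h]\<close> give \<open>(m(c\<^sub>i) - 1) f(h) = 0\<close>, the relators \<open>c\<^sub>i^p\<^sub>i h^q\<^sub>i\<close> give
  \<open>p\<^sub>i f(c\<^sub>i) + q\<^sub>i f(h) = 0\<close> when \<open>m(c\<^sub>i) = 1\<close>, and \<open>c\<^sub>1c\<^sub>2c\<^sub>3\<close> gives one linear relation
  between the \<open>f(c\<^sub>i)\<close>. Together with \<open>e(M) \<noteq> 0\<close> this forces \<open>f(h) = 0\<close>, and \<open>f(c\<^sub>i) = 0\<close>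
  whenever \<open>m(c\<^sub>i) = 1\<close>. Hence the trivial character contributes nothing, and if some
  \<open>m(c\<^sub>i) = 1\<close> every crossed homomorphism is a coboundary. In the exceptional case, where all
  \<open>m(c\<^sub>i) \<noteq> 1\<close>, the crossed homomorphisms form a plane and the coboundaries a line, so
  \<open>\<alpha>\<^sup>2\<close> and \<open>1/\<alpha>\<^sup>2\<close> contribute one dimension each.\<close>

section \<open>Complex 2x2 matrices\<close>

lemma cmat_eqI:
  "(A::cmat) $ 1 $ 1 = B $ 1 $ 1 \<Longrightarrow> A $ 1 $ 2 = B $ 1 $ 2 \<Longrightarrow> A $ 2 $ 1 = B $ 2 $ 1 \<Longrightarrow>
    A $ 2 $ 2 = B $ 2 $ 2 \<Longrightarrow> A = B"
  by (simp add: vec_eq_iff forall_2)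

lemma cmat_mult_entry: "((A::cmat) ** B) $ i $ j = A $ i $ 1 * B $ 1 $ j + A $ i $ 2 * B $ 2 $ j"
  by (simp add: matrix_matrix_mult_def sum_2)

lemma trace_cmat: "trace (A::cmat) = A $ 1 $ 1 + A $ 2 $ 2"
  by (simp add: trace_def sum_2)

lemma mat_1_cmat_entries [simp]:
  "(mat 1 :: cmat) $ 1 $ 1 = 1" "(mat 1 :: cmat) $ 1 $ 2 = 0"
  "(mat 1 :: cmat) $ 2 $ 1 = 0" "(mat 1 :: cmat) $ 2 $ 2 = 1"
  by (simp_all add: mat_def)

lemma csmult_entry [simp]: "csmult c A $ i $ j = c * A $ i $ j"
  by (simp add: csmult_def)

lemma matrix_inv_eqI:
  fixes A B :: "'a::semiring_1^'n^'n"
  assumes AB: "A ** B = mat 1" and BA: "B ** A = mat 1"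
  shows "matrix_inv A = B"
proof -
  have "A ** matrix_inv A = mat 1 \<and> matrix_inv A ** A = mat 1"
    unfolding matrix_inv_def by (rule someI[of _ B]) (use AB BA in blast)
  then have "matrix_inv A = (B ** A) ** matrix_inv A" and "A ** matrix_inv A = mat 1"
    by (simp_all add: BA)
  then show ?thesis
    by (simp add: matrix_mul_assoc[symmetric])
qed

definition diag2 :: "complex \<Rightarrow> cmat" where
  "diag2 x = (\<chi> i j. if i = j then (if i = 1 then x else inverse x) else 0)"

definition offdiag :: "complex \<Rightarrow> complex \<Rightarrow> cmat" where
  "offdiag y z = (\<chi> i j. if i = j then 0 else if i = 1 then y else z)"

lemma diag2_entries [simp]:
  "diag2 x $ 1 $ 1 = x" "diag2 x $ 1 $ 2 = 0" "diag2 x $ 2 $ 1 = 0" "diag2 x $ 2 $ 2 = inverse x"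
  by (simp_all add: diag2_def)

lemma offdiag_entries [simp]:
  "offdiag y z $ 1 $ 1 = 0" "offdiag y z $ 1 $ 2 = y" "offdiag y z $ 2 $ 1 = z" "offdiag y z $ 2 $ 2 = 0"
  by (simp_all add: offdiag_def)

lemma offdiag_eq_iff: "offdiag a b = offdiag c d \<longleftrightarrow> a = c \<and> b = d"
  by (metis offdiag_entries(2,3))

lemma offdiag_in_sl2: "offdiag y z \<in> sl2"
  by (simp add: sl2_def trace_cmat)

lemma diag2_mult: "diag2 x ** diag2 y = diag2 (x * y)"
  by (rule cmat_eqI) (simp_all add: cmat_mult_entry)

lemma diag2_1: "diag2 1 = mat 1"
  by (rule cmat_eqI) simp_all

lemma diag2_eq_mat_1_iff: "diag2 x = mat 1 \<longleftrightarrow> x = 1"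
  by (metis diag2_1 diag2_entries(1))

lemma diag2_eq_minus_mat_1_iff: "diag2 x = - mat 1 \<longleftrightarrow> x = - 1"
proof -
  have "diag2 (- 1) = - mat 1"
    by (rule cmat_eqI) simp_all
  then show ?thesis
    by (metis diag2_entries(1))
qed

lemma matrix_inv_diag2: "x \<noteq> 0 \<Longrightarrow> matrix_inv (diag2 x) = diag2 (inverse x)"
  by (rule matrix_inv_eqI) (simp_all add: diag2_mult diag2_1)

lemma Ad_diag2_entries:
  assumes "x \<noteq> 0"
  shows "Ad (diag2 x) A $ 1 $ 1 = A $ 1 $ 1" "Ad (diag2 x) A $ 1 $ 2 = x\<^sup>2 * A $ 1 $ 2"
    "Ad (diag2 x) A $ 2 $ 1 = inverse (x\<^sup>2) * A $ 2 $ 1" "Ad (diag2 x) A $ 2 $ 2 = A $ 2 $ 2"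
  using assms
  by (simp_all add: Ad_def matrix_inv_diag2 cmat_mult_entry power2_eq_square field_simps)

lemma diag2_of_det_1:
  assumes "is_diagonal A" "det A = 1"
  shows "A = diag2 (A $ 1 $ 1)" "A $ 1 $ 1 \<noteq> 0"
proof -
  have det: "A $ 1 $ 1 * A $ 2 $ 2 = 1"
    using assms by (simp add: det_2 is_diagonal_def)
  then show "A $ 1 $ 1 \<noteq> 0"
    by auto
  with det have "A $ 2 $ 2 = inverse (A $ 1 $ 1)"
    by (simp add: field_simps)
  then show "A = diag2 (A $ 1 $ 1)"
    using assms(1) by (intro cmat_eqI) (auto simp: is_diagonal_def)
qed

section \<open>Characters and crossed homomorphisms of free groups\<close>

definition char_letter :: "('g \<Rightarrow> 'a::field) \<Rightarrow> 'g \<times> bool \<Rightarrow> 'a" where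
  "char_letter m x = (if snd x then m (fst x) else inverse (m (fst x)))"

definition char_word :: "('g \<Rightarrow> 'a::field) \<Rightarrow> ('g \<times> bool) list \<Rightarrow> 'a" where
  "char_word m w = prod_list (map (char_letter m) w)"

lemma char_letter_simps [simp]:
  "char_letter m (g, True) = m g" "char_letter m (g, False) = inverse (m g)"
  by (simp_all add: char_letter_def)

lemma char_word_simps [simp]:
  "char_word m [] = 1" "char_word m (x # w) = char_letter m x * char_word m w"
  "char_word m (u @ w) = char_word m u * char_word m w"
  by (simp_all add: char_word_def)

lemma char_word_replicate: "char_word m (replicate n x) = char_letter m x ^ n"
  by (simp add: char_word_def)

lemma char_word_trivial [simp]: "char_word (\<lambda>_. 1) w = 1"
  by (induction w) (auto simp: char_letter_def)

lemma char_word_power: "char_word (\<lambda>g. m g ^ n) w = char_word m w ^ n"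
  by (induction w) (auto simp: char_letter_def power_mult_distrib power_inverse)

lemma char_word_inverse: "char_word (\<lambda>g. inverse (m g)) w = inverse (char_word m w)"
  by (induction w) (auto simp: char_letter_def)

definition crossed_hom :: "('g \<Rightarrow> 'a::field) \<Rightarrow> (('g \<times> bool) list \<Rightarrow> 'a) \<Rightarrow> bool" where
  "crossed_hom m f \<longleftrightarrow>
     (\<forall>u v. f (u @ v) = f u + char_word m u * f v) \<and> (\<forall>g. f [(g, True), (g, False)] = 0)"

definition coboundary :: "('g \<Rightarrow> 'a::field) \<Rightarrow> 'a \<Rightarrow> ('g \<times> bool) list \<Rightarrow> 'a" where
  "coboundary m y w = y - char_word m w * y"

fun free_crossed_hom :: "('g \<Rightarrow> 'a::field) \<Rightarrow> ('g \<Rightarrow> 'a) \<Rightarrow> ('g \<times> bool) list \<Rightarrow> 'a" where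
  "free_crossed_hom m v [] = 0"
| "free_crossed_hom m v (x # w) =
     (if snd x then v (fst x) else - v (fst x) / m (fst x)) + char_letter m x * free_crossed_hom m v w"

lemma crossed_hom_append: "crossed_hom m f \<Longrightarrow> f (u @ v) = f u + char_word m u * f v"
  by (simp add: crossed_hom_def)

lemma crossed_hom_Nil: "crossed_hom m f \<Longrightarrow> f [] = 0"
  using crossed_hom_append[of m f "[]" "[]"]
  by (metis add_cancel_right_right append_Nil char_word_simps(1) mult_1)

lemma crossed_hom_Cons: "crossed_hom m f \<Longrightarrow> f (x # w) = f [x] + char_letter m x * f w"
  using crossed_hom_append[of m f "[x]" w] by simp

lemma crossed_hom_replicate:
  assumes "crossed_hom m f"
  shows "f (replicate n x) = (\<Sum>j<n. char_letter m x ^ j) * f [x]"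
proof (induction n)
  case 0
  then show ?case using crossed_hom_Nil[OF assms] by simp
next
  case (Suc n)
  have "f (replicate (Suc n) x) = f [x] + char_letter m x * f (replicate n x)"
    using crossed_hom_Cons[OF assms, of x "replicate n x"] by simp
  also have "\<dots> = (1 + char_letter m x * (\<Sum>j<n. char_letter m x ^ j)) * f [x]"
    by (simp only: Suc distrib_right mult_1 mult.assoc)
  also have "1 + char_letter m x * (\<Sum>j<n. char_letter m x ^ j) = (\<Sum>j<Suc n. char_letter m x ^ j)"
    by (simp only: sum.lessThan_Suc_shift sum_distrib_left power_0 power_Suc)
  finally show ?case .
qed

lemma coboundary_generator: "coboundary m y [(g, True)] = (1 - m g) * y"
  by (simp add: coboundary_def algebra_simps)

lemma crossed_hom_zero: "crossed_hom m (\<lambda>_. 0)"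
  by (simp add: crossed_hom_def)

lemma crossed_hom_add: "crossed_hom m f \<Longrightarrow> crossed_hom m f' \<Longrightarrow> crossed_hom m (\<lambda>w. f w + f' w)"
  by (simp add: crossed_hom_def algebra_simps)

lemma crossed_hom_diff: "crossed_hom m f \<Longrightarrow> crossed_hom m f' \<Longrightarrow> crossed_hom m (\<lambda>w. f w - f' w)"
  by (simp add: crossed_hom_def algebra_simps)

lemma crossed_hom_scale: "crossed_hom m f \<Longrightarrow> crossed_hom m (\<lambda>w. c * f w)"
  by (simp add: crossed_hom_def algebra_simps)

locale character =
  fixes m :: "'g \<Rightarrow> 'a::field"
  assumes nonzero: "m g \<noteq> 0"
begin

lemma char_word_nonzero: "char_word m w \<noteq> 0"
  by (induction w) (auto simp: char_letter_def nonzero)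

lemma char_letter_cancel: "char_letter m (g, b) * char_letter m (g, \<not> b) = 1"
  using nonzero[of g] by (cases b) auto

lemma crossed_hom_inverse_letter:
  assumes "crossed_hom m f"
  shows "f [(g, False)] = - f [(g, True)] / m g"
proof -
  have "f [(g, True)] + m g * f [(g, False)] = 0"
    using assms crossed_hom_Cons[OF assms, of "(g, True)" "[(g, False)]"]
    by (simp add: crossed_hom_def)
  then show ?thesis
    using nonzero[of g] by (simp add: field_simps add_eq_0_iff2)
qed

lemma crossed_hom_cancel:
  assumes "crossed_hom m f"
  shows "f [(g, b), (g, \<not> b)] = 0"
  using crossed_hom_Cons[OF assms, of "(g, b)" "[(g, \<not> b)]"]
    crossed_hom_inverse_letter[OF assms, of g] nonzero[of g]
  by (cases b) (auto simp: field_simps)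

lemma crossed_hom_eqI:
  assumes f: "crossed_hom m f" and f': "crossed_hom m f'"
    and generators: "\<And>g. f [(g, True)] = f' [(g, True)]"
  shows "f = f'"
proof
  fix w
  have letters: "f [x] = f' [x]" for x
    using generators crossed_hom_inverse_letter[OF f] crossed_hom_inverse_letter[OF f']
    by (cases x; cases "snd x") auto
  show "f w = f' w"
  proof (induction w)
    case Nil
    show ?case by (simp add: crossed_hom_Nil[OF f] crossed_hom_Nil[OF f'])
  next
    case (Cons x w)
    then show ?case
      using crossed_hom_Cons[OF f, of x w] crossed_hom_Cons[OF f', of x w] letters[of x] by simp
  qed
qed

lemma crossed_hom_coboundary: "crossed_hom m (coboundary m y)"
  using nonzero by (simp add: crossed_hom_def coboundary_def algebra_simps)

lemma crossed_hom_free: "crossed_hom m (free_crossed_hom m v)"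
proof -
  have "free_crossed_hom m v (u @ w) =
      free_crossed_hom m v u + char_word m u * free_crossed_hom m v w" for u w
    by (induction u) (auto simp: algebra_simps)
  then show ?thesis
    using nonzero by (simp add: crossed_hom_def)
qed

end

section \<open>Crossed homomorphisms of the Seifert fibred group\<close>

lemma crossed_hom_product:
  "crossed_hom m f \<Longrightarrow>
    f [(a, True), (b, True), (c, True)] = f [(a, True)] + m a * f [(b, True)] + m a * m b * f [(c, True)]"
  using crossed_hom_Cons[of m f "(a, True)" "[(b, True), (c, True)]"]
    crossed_hom_Cons[of m f "(b, True)" "[(c, True)]"]
  by (simp add: algebra_simps)

abbreviation commutator_rel :: "gen \<Rightarrow> word" where
  "commutator_rel c \<equiv> [(c, True), (H, True), (c, False), (H, False)]"

abbreviation power_rel :: "(nat \<Rightarrow> int) \<Rightarrow> (nat \<Rightarrow> int) \<Rightarrow> nat \<Rightarrow> word" where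
  "power_rel p q i \<equiv> pw (cg i) (p i) @ pw H (q i)"

abbreviation product_rel :: word where
  "product_rel \<equiv> [(C1, True), (C2, True), (C3, True)]"

lemma cg_simps [simp]: "cg 1 = C1" "cg 2 = C2" "cg 3 = C3"
  by (simp_all add: numeral_eq_Suc)

lemma ball_relators_iff:
  "(\<forall>r\<in>relators p q. P r) \<longleftrightarrow>
    (\<forall>i\<in>{1,2,3}. P (commutator_rel (cg i)) \<and> P (power_rel p q i)) \<and> P product_rel"
  unfolding relators_def by blast

definition pi1_crossed_hom ::
    "(nat \<Rightarrow> int) \<Rightarrow> (nat \<Rightarrow> int) \<Rightarrow> (gen \<Rightarrow> 'a::field) \<Rightarrow> (word \<Rightarrow> 'a) \<Rightarrow> bool" where
  "pi1_crossed_hom p q m f \<longleftrightarrow> crossed_hom m f \<and> (\<forall>r\<in>relators p q. f r = 0)"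

lemma pi1_crossed_hom_zero: "pi1_crossed_hom p q m (\<lambda>_. 0)"
  by (simp add: pi1_crossed_hom_def crossed_hom_zero)

lemma pi1_crossed_hom_add:
  "pi1_crossed_hom p q m f \<Longrightarrow> pi1_crossed_hom p q m f' \<Longrightarrow> pi1_crossed_hom p q m (\<lambda>w. f w + f' w)"
  by (simp add: pi1_crossed_hom_def crossed_hom_add)

lemma pi1_crossed_hom_diff:
  "pi1_crossed_hom p q m f \<Longrightarrow> pi1_crossed_hom p q m f' \<Longrightarrow> pi1_crossed_hom p q m (\<lambda>w. f w - f' w)"
  by (simp add: pi1_crossed_hom_def crossed_hom_diff)

lemma pi1_crossed_hom_scale: "pi1_crossed_hom p q m f \<Longrightarrow> pi1_crossed_hom p q m (\<lambda>w. c * f w)"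
  by (simp add: pi1_crossed_hom_def crossed_hom_scale)

text \<open>Here \<open>f i\<close>, \<open>fH\<close> and \<open>u i\<close> stand for \<open>f(c\<^sub>i)\<close>, \<open>f(h)\<close> and \<open>m(c\<^sub>i)\<close>; when all \<open>u i = 1\<close> the
  Euler number forces \<open>fH = 0\<close>.\<close>
lemma fibre_equations_solution:
  fixes u f P Q :: "'i \<Rightarrow> 'a::field" and fH :: 'a
  assumes P: "\<And>i. i \<in> I \<Longrightarrow> P i \<noteq> 0"
    and commutator: "\<And>i. i \<in> I \<Longrightarrow> (u i - 1) * fH = 0"
    and power: "\<And>i. i \<in> I \<Longrightarrow> (if u i = 1 then P i else 0) * f i + Q i * fH = 0"
    and product: "(\<forall>i\<in>I. u i = 1) \<Longrightarrow> (\<Sum>i\<in>I. f i) = 0"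
    and euler: "(\<Sum>i\<in>I. Q i / P i) \<noteq> 0"
  shows "fH = 0" and "\<And>i. i \<in> I \<Longrightarrow> u i = 1 \<Longrightarrow> f i = 0"
proof -
  show fH: "fH = 0"
  proof (cases "\<forall>i\<in>I. u i = 1")
    case True
    have "f i = - (Q i / P i) * fH" if "i \<in> I" for i
      using power[OF that] P[OF that] True that by (simp add: field_simps add_eq_0_iff2)
    then have "(\<Sum>i\<in>I. f i) = - (\<Sum>i\<in>I. Q i / P i) * fH"
      by (simp add: sum_distrib_right sum_negf)
    with product[OF True] euler show ?thesis
      by simp
  next
    case False
    then show ?thesis
      using commutator by auto
  qed
  show "f i = 0" if "i \<in> I" "u i = 1" for i
    using power[OF that(1)] P[OF that(1)] that(2) fH by simp
qed

text \<open>The values on \<open>c\<^sub>1, c\<^sub>2, c\<^sub>3\<close> are chosen so that the product relator holds: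
  \<open>0 + m(c\<^sub>1) \<cdot> 1 + m(c\<^sub>1) m(c\<^sub>2) \<cdot> (- 1 / m(c\<^sub>2)) = 0\<close>.\<close>
definition exceptional_cocycle :: "(gen \<Rightarrow> 'a::field) \<Rightarrow> word \<Rightarrow> 'a" where
  "exceptional_cocycle m =
     free_crossed_hom m (\<lambda>g. case g of C2 \<Rightarrow> 1 | C3 \<Rightarrow> - inverse (m C2) | _ \<Rightarrow> 0)"

locale seifert_char = character m for m :: "gen \<Rightarrow> 'a::field_char_0" +
  fixes p q :: "nat \<Rightarrow> int"
  assumes fibre_trivial: "m H = 1"
    and relators_trivial: "\<forall>r\<in>relators p q. char_word m r = 1"
    and p_pos: "i \<in> {1,2,3} \<Longrightarrow> p i \<ge> 1"
    and euler_nonzero: "(\<Sum>i\<in>{1,2,3}. of_int (q i) / of_int (p i)) \<noteq> (0::'a)"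
begin

lemma crossed_hom_pw_H:
  assumes "crossed_hom m f"
  shows "f (pw H l) = of_int l * f [(H, True)]"
  using crossed_hom_replicate[OF assms] crossed_hom_inverse_letter[OF assms, of H] fibre_trivial
  by (simp add: pw_def)

lemma crossed_hom_commutator_rel:
  assumes "crossed_hom m f"
  shows "f (commutator_rel c) = (m c - 1) * f [(H, True)]"
proof -
  have "f (commutator_rel c) =
      f [(c, True)] + m c * (f [(H, True)] + (f [(c, False)] + inverse (m c) * f [(H, False)]))"
    using crossed_hom_Cons[OF assms, of "(c, True)" "[(H, True), (c, False), (H, False)]"]
      crossed_hom_Cons[OF assms, of "(H, True)" "[(c, False), (H, False)]"]
      crossed_hom_Cons[OF assms, of "(c, False)" "[(H, False)]"] fibre_trivial
    by simp
  also have "\<dots> = (m c - 1) * f [(H, True)]"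
    using crossed_hom_inverse_letter[OF assms] fibre_trivial nonzero[of c]
    by (simp add: field_simps)
  finally show ?thesis .
qed

lemma char_word_pw:
  assumes "0 \<le> k"
  shows "char_word m (pw g k) = m g ^ nat k"
  using assms by (simp add: pw_def char_word_replicate)

lemma char_word_pw_H: "char_word m (pw H l) = 1"
  using fibre_trivial by (simp add: pw_def char_word_replicate)

lemma char_root_of_unity:
  assumes "i \<in> {1,2,3}"
  shows "m (cg i) ^ nat (p i) = 1"
  using relators_trivial char_word_pw[of "p i" "cg i"] char_word_pw_H[of "q i"] p_pos[OF assms] assms
  unfolding ball_relators_iff by auto

lemma crossed_hom_power_rel:
  assumes f: "crossed_hom m f" and i: "i \<in> {1,2,3}"
  shows "f (power_rel p q i) =
    (if m (cg i) = 1 then of_int (p i) else 0) * f [(cg i, True)] + of_int (q i) * f [(H, True)]"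
proof -
  have "(\<Sum>j<nat (p i). m (cg i) ^ j) = (if m (cg i) = 1 then of_int (p i) else 0)"
    using char_root_of_unity[OF i] p_pos[OF i] by (simp add: sum_gp_strict)
  then show ?thesis
    using crossed_hom_append[OF f, of "pw (cg i) (p i)" "pw H (q i)"]
      crossed_hom_replicate[OF f, of "nat (p i)" "(cg i, True)"] crossed_hom_pw_H[OF f]
      char_word_pw[of "p i"] char_root_of_unity[OF i] p_pos[OF i]
    by (simp add: pw_def)
qed

lemma pi1_crossed_hom_iff:
  "pi1_crossed_hom p q m f \<longleftrightarrow> crossed_hom m f \<and>
    (\<forall>i\<in>{1,2,3}. (m (cg i) - 1) * f [(H, True)] = 0 \<and>
       (if m (cg i) = 1 then of_int (p i) else 0) * f [(cg i, True)] + of_int (q i) * f [(H, True)] = 0) \<and>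
    f [(C1, True)] + m C1 * f [(C2, True)] + m C1 * m C2 * f [(C3, True)] = 0"
proof (cases "crossed_hom m f")
  case True
  then show ?thesis
    unfolding pi1_crossed_hom_def ball_relators_iff
    by (simp add: crossed_hom_commutator_rel crossed_hom_power_rel crossed_hom_product)
qed (simp add: pi1_crossed_hom_def)

lemma pi1_crossed_hom_coboundary: "pi1_crossed_hom p q m (coboundary m y)"
  using relators_trivial crossed_hom_coboundary by (simp add: pi1_crossed_hom_def coboundary_def)

lemma pi1_crossed_hom_pi1_invariant:
  assumes "pi1_crossed_hom p q m f" and "pi1_eq p q u v"
  shows "f u = f v"
proof -
  have f: "crossed_hom m f" and vanish: "\<forall>r\<in>relators p q. f r = 0"
    using assms(1) by (simp_all add: pi1_crossed_hom_def)
  show ?thesis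
    using assms(2)
  proof (induction rule: pi1_eq.induct)
    case (cancel u g b v)
    have "f ([(g, b), (g, \<not> b)] @ v) = f v"
      using crossed_hom_append[OF f, of "[(g, b), (g, \<not> b)]" v] crossed_hom_cancel[OF f]
        char_letter_cancel
      by simp
    then show ?case
      using crossed_hom_append[OF f, of u] by simp
  next
    case (rel r u v)
    then show ?case
      using crossed_hom_append[OF f, of u] crossed_hom_append[OF f, of r] vanish relators_trivial
      by simp
  qed auto
qed

lemma pi1_crossed_hom_generator_values:
  assumes f: "pi1_crossed_hom p q m f"
  shows "f [(H, True)] = 0" and "\<And>i. i \<in> {1,2,3} \<Longrightarrow> m (cg i) = 1 \<Longrightarrow> f [(cg i, True)] = 0"
proof -
  have eqs: "\<And>i. i \<in> {1,2,3} \<Longrightarrow> (m (cg i) - 1) * f [(H, True)] = 0"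
    "\<And>i. i \<in> {1,2,3} \<Longrightarrow>
      (if m (cg i) = 1 then of_int (p i) else 0) * f [(cg i, True)] + of_int (q i) * f [(H, True)] = 0"
    "f [(C1, True)] + m C1 * f [(C2, True)] + m C1 * m C2 * f [(C3, True)] = 0"
    using f unfolding pi1_crossed_hom_iff by blast+
  have product: "(\<Sum>i\<in>{1,2,3}. f [(cg i, True)]) = 0" if "\<forall>i\<in>{1,2,3::nat}. m (cg i) = 1"
    using eqs(3) that by (simp add: add.assoc)
  have P: "(of_int (p i) :: 'a) \<noteq> 0" if "i \<in> {1,2,3}" for i
    using p_pos[OF that] by simp
  note solution = fibre_equations_solution[where I = "{1,2,3}" and P = "\<lambda>i. of_int (p i)"
      and u = "\<lambda>i. m (cg i)" and f = "\<lambda>i. f [(cg i, True)]" and Q = "\<lambda>i. of_int (q i)",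
      OF P eqs(1,2) product euler_nonzero]
  show "f [(H, True)] = 0"
    using solution(1) by simp
  show "f [(cg i, True)] = 0" if "i \<in> {1,2,3}" "m (cg i) = 1" for i
    using solution(2)[of i] that by simp
qed

text \<open>The product relator determines the value on the third generator.\<close>
lemma pi1_crossed_hom_vanishes:
  assumes f: "pi1_crossed_hom p q m f"
    and jk: "j \<in> {1,2,3}" "k \<in> {1,2,3}" "j \<noteq> k"
    and zero: "f [(cg j, True)] = 0" "f [(cg k, True)] = 0"
  shows "f = (\<lambda>_. 0)"
proof (rule crossed_hom_eqI)
  show "crossed_hom m f"
    using f by (simp add: pi1_crossed_hom_def)
  have product: "f [(C1, True)] + m C1 * f [(C2, True)] + m C1 * m C2 * f [(C3, True)] = 0"
    using f unfolding pi1_crossed_hom_iff by blast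
  have "f [(C1, True)] = 0 \<and> f [(C2, True)] = 0 \<and> f [(C3, True)] = 0"
    using jk zero product nonzero[of C1] nonzero[of C2] by auto
  then show "f [(g, True)] = 0" for g
    using pi1_crossed_hom_generator_values(1)[OF f] by (cases g) simp_all
qed (rule crossed_hom_zero)

lemma pi1_crossed_hom_eq_on_two_generators:
  assumes f: "pi1_crossed_hom p q m f" and f': "pi1_crossed_hom p q m f'"
    and jk: "j \<in> {1,2,3}" "k \<in> {1,2,3}" "j \<noteq> k"
    and agree: "f [(cg j, True)] = f' [(cg j, True)]" "f [(cg k, True)] = f' [(cg k, True)]"
  shows "f = f'"
proof -
  have "(\<lambda>w. f w - f' w) = (\<lambda>_. 0)"
    using pi1_crossed_hom_vanishes[OF pi1_crossed_hom_diff[OF f f'] jk] agree by simp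
  then show ?thesis
    by (simp add: fun_eq_iff)
qed

lemma pi1_crossed_hom_is_coboundary:
  assumes f: "pi1_crossed_hom p q m f" and k: "k \<in> {1,2,3}" "m (cg k) = 1"
  shows "\<exists>y. f = coboundary m y"
proof -
  define j :: nat where "j = (if k = 1 then 2 else 1)"
  have j: "j \<in> {1,2,3}" "j \<noteq> k"
    using k(1) by (auto simp: j_def)
  obtain y where y: "f [(cg j, True)] = coboundary m y [(cg j, True)]"
  proof (cases "m (cg j) = 1")
    case True
    then show ?thesis
      using that[of 0] pi1_crossed_hom_generator_values(2)[OF f j(1)] by (simp add: coboundary_generator)
  next
    case False
    then show ?thesis
      using that[of "f [(cg j, True)] / (1 - m (cg j))"] by (simp add: coboundary_generator)
  qed
  have "f [(cg k, True)] = coboundary m y [(cg k, True)]"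
    using pi1_crossed_hom_generator_values(2)[OF f k] k(2) by (simp add: coboundary_generator)
  then have "f = coboundary m y"
    using pi1_crossed_hom_eq_on_two_generators[OF f pi1_crossed_hom_coboundary j(1) k(1) j(2) y] by simp
  then show ?thesis ..
qed

lemma pi1_crossed_hom_exceptional_cocycle:
  assumes "\<forall>i\<in>{1,2,3}. m (cg i) \<noteq> 1"
  shows "pi1_crossed_hom p q m (exceptional_cocycle m)"
proof -
  have "crossed_hom m (exceptional_cocycle m)"
    unfolding exceptional_cocycle_def by (rule crossed_hom_free)
  moreover have "exceptional_cocycle m [(C1, True)] = 0" "exceptional_cocycle m [(C2, True)] = 1"
    "exceptional_cocycle m [(C3, True)] = - inverse (m C2)" "exceptional_cocycle m [(H, True)] = 0"
    by (simp_all add: exceptional_cocycle_def)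
  ultimately show ?thesis
    unfolding pi1_crossed_hom_iff using assms nonzero[of C2] by simp
qed

lemma pi1_crossed_hom_decomposition:
  assumes f: "pi1_crossed_hom p q m f" and exceptional: "\<forall>i\<in>{1,2,3}. m (cg i) \<noteq> 1"
  shows "\<exists>c y. f = (\<lambda>w. c * exceptional_cocycle m w + coboundary m y w)"
proof -
  define y where "y = f [(C1, True)] / (1 - m C1)"
  define c where "c = f [(C2, True)] - coboundary m y [(C2, True)]"
  have g: "pi1_crossed_hom p q m (\<lambda>w. c * exceptional_cocycle m w + coboundary m y w)"
    using pi1_crossed_hom_add pi1_crossed_hom_scale pi1_crossed_hom_coboundary
      pi1_crossed_hom_exceptional_cocycle[OF exceptional] by blast
  have "m C1 \<noteq> 1"
    using exceptional by auto
  then have "f [(cg 1, True)] = c * exceptional_cocycle m [(cg 1, True)] + coboundary m y [(cg 1, True)]"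
    by (simp add: exceptional_cocycle_def coboundary_generator y_def)
  moreover have "f [(cg 2, True)] = c * exceptional_cocycle m [(cg 2, True)] + coboundary m y [(cg 2, True)]"
    by (simp add: exceptional_cocycle_def c_def)
  ultimately have "f = (\<lambda>w. c * exceptional_cocycle m w + coboundary m y w)"
    using pi1_crossed_hom_eq_on_two_generators[OF f g, of 1 2] by simp
  then show ?thesis
    by blast
qed

lemma exceptional_cocycle_not_coboundary:
  assumes exceptional: "\<forall>i\<in>{1,2,3}. m (cg i) \<noteq> 1"
    and coboundary: "(\<lambda>w. c * exceptional_cocycle m w) = coboundary m y"
  shows "c = 0"
proof -
  have "0 = (1 - m C1) * y" and "c = (1 - m C2) * y"
    using fun_cong[OF coboundary, of "[(C1, True)]"] fun_cong[OF coboundary, of "[(C2, True)]"]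
    by (simp_all add: exceptional_cocycle_def coboundary_generator)
  moreover have "m C1 \<noteq> 1"
    using exceptional by auto
  ultimately show ?thesis
    by simp
qed

end

section \<open>Diagonal representations\<close>

definition offdiag_cochain :: "(word \<Rightarrow> complex) \<Rightarrow> (word \<Rightarrow> complex) \<Rightarrow> word \<Rightarrow> cmat" where
  "offdiag_cochain fE fF w = offdiag (fE w) (fF w)"

locale seifert_diagonal_rep =
  fixes p q :: "nat \<Rightarrow> int" and \<rho> :: "gen \<Rightarrow> cmat"
  assumes p_pos: "i \<in> {1,2,3} \<Longrightarrow> p i \<ge> 1"
    and euler_nonzero: "(\<Sum>i\<in>{1,2,3}. of_int (q i) / of_int (p i)) \<noteq> (0::complex)"
    and SL2_rep: "is_SL2_rep p q \<rho>"
    and diagonal: "diagonal_rep \<rho>"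
    and fibre_central: "\<rho> H = mat 1 \<or> \<rho> H = - mat 1"
begin

definition \<alpha> :: "gen \<Rightarrow> complex" where
  "\<alpha> g = \<rho> g $ 1 $ 1"

definition charE :: "gen \<Rightarrow> complex" where
  "charE g = \<alpha> g ^ 2"

definition charF :: "gen \<Rightarrow> complex" where
  "charF g = inverse (\<alpha> g ^ 2)"

lemma rho_eq_diag2: "\<rho> g = diag2 (\<alpha> g)" and alpha_nonzero: "\<alpha> g \<noteq> 0"
  using diag2_of_det_1[of "\<rho> g"] SL2_rep diagonal
  unfolding \<alpha>_def is_SL2_rep_def diagonal_rep_def by auto

lemma character_alpha: "character \<alpha>"
  using alpha_nonzero by unfold_locales

lemma rho_word_eq_diag2: "rho_word \<rho> w = diag2 (char_word \<alpha> w)"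
proof (induction w)
  case Nil
  show ?case by (simp add: rho_word_def diag2_1)
next
  case (Cons x w)
  have "letter_mat \<rho> x = diag2 (char_letter \<alpha> x)"
    using alpha_nonzero by (simp add: letter_mat_def char_letter_def rho_eq_diag2 matrix_inv_diag2)
  with Cons show ?case
    by (simp add: rho_word_def diag2_mult)
qed

lemma char_word_alpha_relators: "\<forall>r\<in>relators p q. char_word \<alpha> r = 1"
  using SL2_rep by (simp add: is_SL2_rep_def rho_word_eq_diag2 diag2_eq_mat_1_iff)

lemma alpha_H_eq_pm_1: "\<alpha> H = 1 \<or> \<alpha> H = - 1"
  using fibre_central by (simp add: rho_eq_diag2 diag2_eq_mat_1_iff diag2_eq_minus_mat_1_iff)

lemma rho_eq_pm_1_iff: "\<rho> g = mat 1 \<or> \<rho> g = - mat 1 \<longleftrightarrow> charE g = 1"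
  by (simp add: rho_eq_diag2 diag2_eq_mat_1_iff diag2_eq_minus_mat_1_iff charE_def power2_eq_1_iff)

lemma charF_eq_1_iff: "charF g = 1 \<longleftrightarrow> charE g = 1"
  by (simp add: charE_def charF_def)

lemma char_word_charE: "char_word charE w = char_word \<alpha> w ^ 2"
  using char_word_power[of \<alpha> 2 w] by (simp add: charE_def[abs_def])

lemma char_word_charF: "char_word charF w = inverse (char_word \<alpha> w ^ 2)"
  using char_word_inverse[of "\<lambda>g. \<alpha> g ^ 2" w] char_word_power[of \<alpha> 2 w]
  by (simp add: charF_def[abs_def])

sublocale trivial: seifert_char "\<lambda>_. 1 :: complex" p q
  using p_pos euler_nonzero by unfold_locales auto

sublocale E: seifert_char charE p q
  using p_pos euler_nonzero alpha_nonzero alpha_H_eq_pm_1 char_word_alpha_relators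
  by unfold_locales (auto simp: charE_def char_word_charE)

sublocale F: seifert_char charF p q
  using p_pos euler_nonzero alpha_nonzero alpha_H_eq_pm_1 char_word_alpha_relators
  by unfold_locales (auto simp: charF_def char_word_charF)

lemma Ad_rho_word_entries:
  "Ad (rho_word \<rho> w) A $ 1 $ 1 = A $ 1 $ 1"
  "Ad (rho_word \<rho> w) A $ 1 $ 2 = char_word charE w * A $ 1 $ 2"
  "Ad (rho_word \<rho> w) A $ 2 $ 1 = char_word charF w * A $ 2 $ 1"
  "Ad (rho_word \<rho> w) A $ 2 $ 2 = A $ 2 $ 2"
  using Ad_diag2_entries[OF character.char_word_nonzero[OF character_alpha]]
  by (simp_all add: rho_word_eq_diag2 char_word_charE char_word_charF)

lemma Z1_coordinate:
  assumes \<epsilon>: "\<epsilon> \<in> Z1 p q \<rho>"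
    and coord_add: "\<And>X Y. coord (X + Y) = (coord X + coord Y :: complex)"
    and coord_Ad: "\<And>u X. coord (Ad (rho_word \<rho> u) X) = char_word m u * coord X"
  shows "pi1_crossed_hom p q m (\<lambda>w. coord (\<epsilon> w))"
proof -
  have pi1: "\<And>u v. pi1_eq p q u v \<Longrightarrow> \<epsilon> u = \<epsilon> v"
    and cocycle: "\<And>u v. \<epsilon> (u @ v) = \<epsilon> u + Ad (rho_word \<rho> u) (\<epsilon> v)"
    using \<epsilon> unfolding Z1_def by blast+
  have "Ad (rho_word \<rho> []) (\<epsilon> []) = \<epsilon> []"
    by (rule cmat_eqI) (simp_all add: Ad_rho_word_entries)
  then have Nil: "\<epsilon> [] = 0"
    using cocycle[of "[]" "[]"] by simp
  have coord_0: "coord 0 = 0"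
    using coord_add[of 0 0] by (metis add.right_neutral add_cancel_right_right)
  have "\<epsilon> r = 0" if "r \<in> relators p q" for r
    using pi1[OF pi1_eq.rel[OF that, where u = "[]" and v = "[]"]] Nil by simp
  moreover have "\<epsilon> [(g, True), (g, False)] = 0" for g
    using pi1[OF pi1_eq.cancel[of p q "[]" g True "[]"]] Nil by simp
  ultimately show ?thesis
    unfolding pi1_crossed_hom_def crossed_hom_def by (simp add: cocycle coord_add coord_Ad coord_0)
qed

lemma Z1_coordinates:
  assumes "\<epsilon> \<in> Z1 p q \<rho>"
  shows "pi1_crossed_hom p q (\<lambda>_. 1) (\<lambda>w. \<epsilon> w $ 1 $ 1)"
    and "pi1_crossed_hom p q charE (\<lambda>w. \<epsilon> w $ 1 $ 2)"
    and "pi1_crossed_hom p q charF (\<lambda>w. \<epsilon> w $ 2 $ 1)"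
  by (rule Z1_coordinate[OF assms]; simp add: Ad_rho_word_entries)+

lemma Z1_diagonal_zero:
  assumes \<epsilon>: "\<epsilon> \<in> Z1 p q \<rho>"
  shows "\<epsilon> w $ 1 $ 1 = 0" and "\<epsilon> w $ 2 $ 2 = 0"
proof -
  obtain y where "(\<lambda>w. \<epsilon> w $ 1 $ 1) = coboundary (\<lambda>_. 1) y"
    using trivial.pi1_crossed_hom_is_coboundary[OF Z1_coordinates(1)[OF \<epsilon>], of 1] by auto
  then show diagonal_1: "\<epsilon> w $ 1 $ 1 = 0"
    by (simp add: fun_eq_iff coboundary_def)
  have "\<epsilon> w \<in> sl2"
    using \<epsilon> unfolding Z1_def by blast
  then show "\<epsilon> w $ 2 $ 2 = 0"
    using diagonal_1 by (simp add: sl2_def trace_cmat)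
qed

lemma offdiag_cochain_in_Z1:
  assumes fE: "pi1_crossed_hom p q charE fE" and fF: "pi1_crossed_hom p q charF fF"
  shows "offdiag_cochain fE fF \<in> Z1 p q \<rho>"
proof -
  have "offdiag_cochain fE fF (u @ v) = offdiag_cochain fE fF u + Ad (rho_word \<rho> u) (offdiag_cochain fE fF v)"
    for u v
    using fE fF
    by (intro cmat_eqI) (simp_all add: offdiag_cochain_def Ad_rho_word_entries pi1_crossed_hom_def crossed_hom_append)
  moreover have "offdiag_cochain fE fF u = offdiag_cochain fE fF v" if "pi1_eq p q u v" for u v
    using E.pi1_crossed_hom_pi1_invariant[OF fE that] F.pi1_crossed_hom_pi1_invariant[OF fF that]
    by (simp add: offdiag_cochain_def)
  ultimately show ?thesis
    unfolding Z1_def by (simp add: offdiag_cochain_def offdiag_in_sl2)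
qed

lemma B1_iff:
  "\<epsilon> \<in> B1 \<rho> \<longleftrightarrow> (\<exists>yE yF. \<epsilon> = offdiag_cochain (coboundary charE yE) (coboundary charF yF))"
proof
  assume "\<epsilon> \<in> B1 \<rho>"
  then obtain A where \<epsilon>: "\<epsilon> = (\<lambda>w. A - Ad (rho_word \<rho> w) A)"
    unfolding B1_def by blast
  have "\<epsilon> = offdiag_cochain (coboundary charE (A $ 1 $ 2)) (coboundary charF (A $ 2 $ 1))"
    unfolding \<epsilon> by (intro ext cmat_eqI)
      (simp_all add: offdiag_cochain_def coboundary_def Ad_rho_word_entries)
  then show "\<exists>yE yF. \<epsilon> = offdiag_cochain (coboundary charE yE) (coboundary charF yF)"
    by blast
next
  assume "\<exists>yE yF. \<epsilon> = offdiag_cochain (coboundary charE yE) (coboundary charF yF)"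
  then obtain yE yF where \<epsilon>: "\<epsilon> = offdiag_cochain (coboundary charE yE) (coboundary charF yF)"
    by blast
  have "\<epsilon> = (\<lambda>w. offdiag yE yF - Ad (rho_word \<rho> w) (offdiag yE yF))"
    unfolding \<epsilon> by (intro ext cmat_eqI)
      (simp_all add: offdiag_cochain_def coboundary_def Ad_rho_word_entries)
  then show "\<epsilon> \<in> B1 \<rho>"
    unfolding B1_def using offdiag_in_sl2 by blast
qed

lemma B1_subset_Z1: "B1 \<rho> \<subseteq> Z1 p q \<rho>"
proof
  fix \<epsilon> assume "\<epsilon> \<in> B1 \<rho>"
  then obtain yE yF where "\<epsilon> = offdiag_cochain (coboundary charE yE) (coboundary charF yF)"
    using B1_iff by blast
  then show "\<epsilon> \<in> Z1 p q \<rho>"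
    using offdiag_cochain_in_Z1[OF E.pi1_crossed_hom_coboundary F.pi1_crossed_hom_coboundary] by simp
qed

lemma Z1_eq_B1_if_fixed_generator:
  assumes k: "k \<in> {1,2,3}" "charE (cg k) = 1"
  shows "Z1 p q \<rho> = B1 \<rho>"
proof
  show "Z1 p q \<rho> \<subseteq> B1 \<rho>"
  proof
    fix \<epsilon> assume \<epsilon>: "\<epsilon> \<in> Z1 p q \<rho>"
    obtain yE where "(\<lambda>w. \<epsilon> w $ 1 $ 2) = coboundary charE yE"
      using E.pi1_crossed_hom_is_coboundary[OF Z1_coordinates(2)[OF \<epsilon>] k] by blast
    moreover obtain yF where "(\<lambda>w. \<epsilon> w $ 2 $ 1) = coboundary charF yF"
      using F.pi1_crossed_hom_is_coboundary[OF Z1_coordinates(3)[OF \<epsilon>] k(1)] k(2) charF_eq_1_iff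
      by blast
    ultimately have "\<epsilon> = offdiag_cochain (coboundary charE yE) (coboundary charF yF)"
      using Z1_diagonal_zero[OF \<epsilon>] by (intro ext cmat_eqI) (simp_all add: offdiag_cochain_def fun_eq_iff)
    then show "\<epsilon> \<in> B1 \<rho>"
      using B1_iff by blast
  qed
qed (rule B1_subset_Z1)

definition exceptional_basis :: "(word \<Rightarrow> cmat) list" where
  "exceptional_basis =
     [offdiag_cochain (exceptional_cocycle charE) (\<lambda>_. 0), offdiag_cochain (\<lambda>_. 0) (exceptional_cocycle charF)]"

lemma lincomb_exceptional_basis:
  "lincomb [a, b] exceptional_basis =
     offdiag_cochain (\<lambda>w. a * exceptional_cocycle charE w) (\<lambda>w. b * exceptional_cocycle charF w)"
  by (intro ext cmat_eqI)
    (simp_all add: lincomb_def exceptional_basis_def offdiag_cochain_def numeral_2_eq_2 lessThan_Suc)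

lemma H1_dim_2_if_exceptional:
  assumes exceptional: "\<forall>i\<in>{1,2,3}. charE (cg i) \<noteq> 1"
  shows "H1_dim p q \<rho> 2"
proof -
  have exceptional_F: "\<forall>i\<in>{1,2,3}. charF (cg i) \<noteq> 1"
    using exceptional charF_eq_1_iff by blast
  have basis: "set exceptional_basis \<subseteq> Z1 p q \<rho>"
    by (auto simp: exceptional_basis_def intro!: offdiag_cochain_in_Z1 pi1_crossed_hom_zero
        E.pi1_crossed_hom_exceptional_cocycle[OF exceptional]
        F.pi1_crossed_hom_exceptional_cocycle[OF exceptional_F])
  have spanning: "\<exists>cs. length cs = 2 \<and> \<epsilon> - lincomb cs exceptional_basis \<in> B1 \<rho>"
    if \<epsilon>: "\<epsilon> \<in> Z1 p q \<rho>" for \<epsilon>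
  proof -
    obtain a yE where yE: "(\<lambda>w. \<epsilon> w $ 1 $ 2) = (\<lambda>w. a * exceptional_cocycle charE w + coboundary charE yE w)"
      using E.pi1_crossed_hom_decomposition[OF Z1_coordinates(2)[OF \<epsilon>] exceptional] by blast
    obtain b yF where yF: "(\<lambda>w. \<epsilon> w $ 2 $ 1) = (\<lambda>w. b * exceptional_cocycle charF w + coboundary charF yF w)"
      using F.pi1_crossed_hom_decomposition[OF Z1_coordinates(3)[OF \<epsilon>] exceptional_F] by blast
    have "\<epsilon> - lincomb [a, b] exceptional_basis = offdiag_cochain (coboundary charE yE) (coboundary charF yF)"
      using Z1_diagonal_zero[OF \<epsilon>] yE yF
      by (intro ext cmat_eqI) (simp_all add: lincomb_exceptional_basis offdiag_cochain_def fun_eq_iff)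
    then show ?thesis
      using B1_iff by (intro exI[of _ "[a, b]"]) auto
  qed
  have independent: "\<forall>c\<in>set cs. c = 0"
    if "length cs = 2" and B1: "lincomb cs exceptional_basis \<in> B1 \<rho>" for cs
  proof -
    obtain a b where cs: "cs = [a, b]"
      using \<open>length cs = 2\<close> by (auto simp: numeral_2_eq_2 length_Suc_conv)
    obtain yE yF where "offdiag_cochain (\<lambda>w. a * exceptional_cocycle charE w) (\<lambda>w. b * exceptional_cocycle charF w)
        = offdiag_cochain (coboundary charE yE) (coboundary charF yF)"
      using B1 B1_iff by (auto simp: cs lincomb_exceptional_basis)
    then have "(\<lambda>w. a * exceptional_cocycle charE w) = coboundary charE yE"
      and "(\<lambda>w. b * exceptional_cocycle charF w) = coboundary charF yF"
      by (simp_all add: fun_eq_iff offdiag_cochain_def offdiag_eq_iff)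
    then show ?thesis
      using E.exceptional_cocycle_not_coboundary[OF exceptional]
        F.exceptional_cocycle_not_coboundary[OF exceptional_F] cs
      by simp
  qed
  have "length exceptional_basis = 2"
    by (simp add: exceptional_basis_def)
  then show ?thesis
    unfolding H1_dim_def quot_dim_eq_def using basis spanning independent by blast
qed

lemma exceptional_iff: "exceptional \<rho> \<longleftrightarrow> (\<forall>i\<in>{1,2,3}. charE (cg i) \<noteq> 1)"
  using fibre_central rho_eq_pm_1_iff unfolding exceptional_def by blast

end

theorem lemma5p14:
  fixes p q :: "nat \<Rightarrow> int" and \<rho> :: "gen \<Rightarrow> cmat"
  assumes "\<forall>i \<in> {1,2,3}. p i \<ge> 1 \<and> coprime (p i) (q i)"
    and "(\<Sum>i\<in>{1,2,3::nat}. of_int (q i) / of_int (p i) :: real) \<noteq> 0"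
    and "is_SL2_rep p q \<rho>"
    and "diagonal_rep \<rho>"
    and "\<rho> H = mat 1 \<or> \<rho> H = - mat 1"
  shows "(\<not> exceptional \<rho> \<longrightarrow> Z1 p q \<rho> = B1 \<rho>) \<and>
         (exceptional \<rho> \<longrightarrow> H1_dim p q \<rho> 2)"
proof -
  have "(\<Sum>i\<in>{1,2,3::nat}. of_int (q i) / of_int (p i) :: complex)
      = of_real (\<Sum>i\<in>{1,2,3::nat}. of_int (q i) / of_int (p i))"
    by simp
  then have "(\<Sum>i\<in>{1,2,3::nat}. of_int (q i) / of_int (p i) :: complex) \<noteq> 0"
    using assms(2) by (simp only: of_real_eq_0_iff not_False_eq_True)
  then interpret seifert_diagonal_rep p q \<rho>
    using assms(1,3-5) by unfold_locales auto
  show ?thesis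
  proof (intro conjI impI)
    assume "\<not> exceptional \<rho>"
    then obtain k where "k \<in> {1,2,3}" "charE (cg k) = 1"
      using exceptional_iff by blast
    then show "Z1 p q \<rho> = B1 \<rho>"
      by (rule Z1_eq_B1_if_fixed_generator)
  next
    assume "exceptional \<rho>"
    then show "H1_dim p q \<rho> 2"
      using exceptional_iff H1_dim_2_if_exceptional by blast
  qed
qed

end
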